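(* Let $1\le p<\infty$. Let $f:\mathbb R\to\mathbb R$ be Henstock–Kurzweil integrable on every compact interval and suppose (a) the Henstock–Kurzweil integral $\int_{-\infty}^\infty f(t)\,dt$ exists and equals $0$, and (b) the Henstock–Kurzweil integral $\int_{-\infty}^\infty |t|^\alpha f(t)\,dt$ exists for some $\alpha>1/p$. Then $F(x)=\int_{-\infty}^x f(t)\,dt$ belongs to $L^p(\mathbb R)$, and hence $f=F'\in L'^{\,p}$.
   Context: $L'^{\,p}=\{f\in\mathcal S' : f=F' \text{ (distributional derivative) for some } F\in L^p(\mathbb R)\}$. *)

theory Defs
  imports "HOL-Analysis.Analysis"
begin

definition in_Lp :: "real \<Rightarrow> (real \<Rightarrow> real) \<Rightarrow> bool" where
  "in_Lp p F \<longleftrightarrow> F \<in> borel_measurable lebesgue \<and> integrable lebesgue (\<lambda>x. \<bar>F x\<bar> powr p)"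

definition test_function :: "(real \<Rightarrow> real) \<Rightarrow> bool" where
  "test_function \<phi> \<longleftrightarrow> (\<forall>n. ((deriv ^^ n) \<phi>) differentiable_on UNIV)
      \<and> compact (closure {x. \<phi> x \<noteq> 0})"

definition distr_deriv :: "(real \<Rightarrow> real) \<Rightarrow> (real \<Rightarrow> real) \<Rightarrow> bool" where
  "distr_deriv F f \<longleftrightarrow> (\<forall>\<phi>. test_function \<phi> \<longrightarrow>
      (\<lambda>x. f x * \<phi> x) integrable_on UNIV \<and>
      (\<lambda>x. F x * deriv \<phi> x) integrable_on UNIV \<and>
      integral UNIV (\<lambda>x. F x * deriv \<phi> x) = - integral UNIV (\<lambda>x. f x * \<phi> x))"

end

theory Submission
  imports Defs
begin

(* 1. Improper integrals on the line: an integrable h is integrable on every half-line, its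
      primitive is continuous, tends to 0 at -\<infinity> and to \<integral> h at +\<infinity>, and is therefore bounded;
      so the integrals of h over all intervals are bounded.
   2. Bonnet's second mean value theorem bounds \<integral>_u^v \<psi> h by the oscillation of the primitive
      of h, for monotone and, by splitting, for Lipschitz weights \<psi>.
   3. Integration by parts \<integral>_a^b f \<phi> = [F \<phi>]_a^b - \<integral>_a^b F \<phi>' for C^1 functions \<phi>, proved by
      showing with step 2 that the difference of both sides has derivative 0 in the upper limit.
   4. Decay: for x \<ge> 1, F(x) = -\<integral>_x^\<infinity> |t|^(-\<alpha>) g(t) dt with a decreasing weight, so step 2 and
      the boundedness of the integrals of g give |F(x)| = O(|x|^(-\<alpha>)); similarly for x \<le> -1.
      As F is also bounded and \<alpha> p > 1, |F|^p has an integrable majorant, i.e. F \<in> L^p.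
   5. Applied to a test function, step 3 shows that f is the distributional derivative of F. *)

lemma hk_interval_approx:
  fixes h :: "real \<Rightarrow> real"
  assumes "(h has_integral L) UNIV" and "e > 0"
  obtains B where "B > 0" and "\<And>a b. a \<le> -B \<Longrightarrow> B \<le> b \<Longrightarrow> \<bar>integral {a..b} h - L\<bar> < e"
proof -
  from assms(1)[unfolded has_integral_alt'] assms(2)
  obtain B where "B > 0" and B: "\<And>a b. ball 0 B \<subseteq> cbox a b \<Longrightarrow>
      norm (integral (cbox a b) (\<lambda>x. if x \<in> UNIV then h x else 0) - L) < e"
    by blast
  moreover have "ball 0 B \<subseteq> cbox a b" if "a \<le> -B" "B \<le> b" for a b :: real
    using that by (auto simp: dist_real_def)
  ultimately show thesis using that by auto
qed

lemma ball_subset_interval: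
  fixes a b B :: real
  assumes "ball 0 B \<subseteq> {a..b}" and "B > 0"
  shows "a \<le> -B" and "B \<le> b"
proof -
  have "cball 0 B \<subseteq> {a..b}"
    using closure_minimal[OF assms(1)] closure_ball[of 0 B] assms(2) by simp
  then show "a \<le> -B" "B \<le> b" using assms(2) by (auto simp: subset_eq)
qed

(* A function integrable over the line is integrable over every half-line (-\<infinity>,x]: the truncated
   integrals satisfy the Cauchy criterion. *)
lemma hk_halfline_integrable:
  fixes h :: "real \<Rightarrow> real"
  assumes h: "(h has_integral L) UNIV"
  shows "h integrable_on {..x}"
  unfolding integrable_alt[of h]
proof (intro conjI allI impI)
  fix a b :: real
  have "h integrable_on {a..min x b}" using h integrable_on_subinterval by blast
  moreover have "cbox a b \<inter> {..x} = {a..min x b}" by auto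
  ultimately show "(\<lambda>t. if t \<in> {..x} then h t else 0) integrable_on cbox a b"
    unfolding integrable_restrict_Int by simp
next
  fix e :: real assume "e > 0"
  then obtain B where "B > 0"
    and B: "\<And>a b. a \<le> -B \<Longrightarrow> B \<le> b \<Longrightarrow> \<bar>integral {a..b} h - L\<bar> < e/2"
    using hk_interval_approx[OF h half_gt_zero] by blast
  define R where "R = max B (\<bar>x\<bar> + 1)"
  have "R > 0" "B \<le> R" using \<open>B > 0\<close> by (auto simp: R_def)
  let ?g = "\<lambda>t. if t \<in> {..x} then h t else 0"
  \<comment> \<open>Once the box contains \<open>[-R,R]\<close>, the truncated integral differs from an integral over
      \<open>[a,R]\<close>, which is close to \<open>L\<close>, by the fixed amount \<open>\<integral>_x^R h\<close>.\<close>
  have cut: "a \<le> -R \<and> integral (cbox a b) ?g = integral {a..R} h - integral {x..R} h"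
    if "ball 0 R \<subseteq> cbox a b" for a b :: real
  proof -
    have "a \<le> -R" and "R \<le> b" using ball_subset_interval[of R a b] that \<open>R > 0\<close> by auto
    then have ax: "a \<le> x" "x \<le> R" "x \<le> b" by (auto simp: R_def)
    have "integral (cbox a b) ?g = integral {a..x} h"
      unfolding integral_restrict_Int using ax by (simp add: min_absorb1)
    also have "\<dots> = integral {a..R} h - integral {x..R} h"
      using Henstock_Kurzweil_Integration.integral_combine[OF ax(1,2)] h integrable_on_subinterval
      by fastforce
    finally show ?thesis using \<open>a \<le> -R\<close> by simp
  qed
  show "\<exists>R>0. \<forall>a b c d. ball 0 R \<subseteq> cbox a b \<and> ball 0 R \<subseteq> cbox c d \<longrightarrow>
      norm (integral (cbox a b) ?g - integral (cbox c d) ?g) < e"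
  proof (intro exI[of _ R] conjI allI impI)
    fix a b c d :: real
    assume "ball 0 R \<subseteq> cbox a b \<and> ball 0 R \<subseteq> cbox c d"
    then have "a \<le> -R" "c \<le> -R"
      and "integral (cbox a b) ?g = integral {a..R} h - integral {x..R} h"
      and "integral (cbox c d) ?g = integral {c..R} h - integral {x..R} h"
      using cut by auto
    moreover have "\<bar>integral {a..R} h - L\<bar> < e/2" "\<bar>integral {c..R} h - L\<bar> < e/2"
      using B \<open>a \<le> -R\<close> \<open>c \<le> -R\<close> \<open>B \<le> R\<close> by auto
    ultimately show "norm (integral (cbox a b) ?g - integral (cbox c d) ?g) < e"
      unfolding real_norm_def by linarith
  qed (rule \<open>R > 0\<close>)
qed

lemma hk_halfline_split:
  fixes h :: "real \<Rightarrow> real"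
  assumes h: "(h has_integral L) UNIV" and "x \<le> y"
  shows "integral {..y} h = integral {..x} h + integral {x..y} h"
proof -
  have "(h has_integral integral {..x} h + integral {x..y} h) ({..x} \<union> {x..y})"
  proof (rule has_integral_Un)
    show "(h has_integral integral {..x} h) {..x}"
      using hk_halfline_integrable[OF h] by (rule integrable_integral)
    show "(h has_integral integral {x..y} h) {x..y}"
      using h integrable_on_subinterval by (blast intro: integrable_integral)
    show "negligible ({..x} \<inter> {x..y})"
      using \<open>x \<le> y\<close> by (simp add: Int_commute)
  qed
  moreover have "{..x} \<union> {x..y} = {..y}" using \<open>x \<le> y\<close> by auto
  ultimately show ?thesis by (simp add: integral_unique)
qed

lemma hk_halfline_limit:
  fixes h :: "real \<Rightarrow> real"
  assumes h: "(h has_integral L) UNIV"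
  shows "((\<lambda>a. integral {a..y} h) \<longlongrightarrow> integral {..y} h) at_bot"
proof (rule tendstoI)
  fix e :: real assume "e > 0"
  have "(h has_integral integral {..y} h) {..y}"
    using hk_halfline_integrable[OF h] by (rule integrable_integral)
  from this[unfolded has_integral_alt'] \<open>e > 0\<close>
  obtain B where B: "B > 0" "\<And>a b. ball 0 B \<subseteq> cbox a b \<Longrightarrow>
      norm (integral (cbox a b) (\<lambda>x. if x \<in> {..y} then h x else 0) - integral {..y} h) < e"
    by blast
  have "dist (integral {a..y} h) (integral {..y} h) < e" if a: "a \<le> min (-B) y" for a
  proof -
    have "ball 0 B \<subseteq> cbox a (max B y)" using a by (auto simp: dist_real_def)
    moreover have "cbox a (max B y) \<inter> {..y} = {a..y}" using a by auto
    ultimately show ?thesis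
      using B(2)[of a "max B y"] unfolding integral_restrict_Int dist_norm by simp
  qed
  then show "\<forall>\<^sub>F a in at_bot. dist (integral {a..y} h) (integral {..y} h) < e"
    unfolding eventually_at_bot_linorder by blast
qed

lemma hk_primitive_at_top:
  fixes h :: "real \<Rightarrow> real"
  assumes h: "(h has_integral L) UNIV"
  shows "((\<lambda>y. integral {..y} h) \<longlongrightarrow> L) at_top"
proof (rule tendstoI)
  fix e :: real assume "e > 0"
  then obtain B where B: "\<And>a b. a \<le> -B \<Longrightarrow> B \<le> b \<Longrightarrow> \<bar>integral {a..b} h - L\<bar> < e/2"
    using hk_interval_approx[OF h half_gt_zero] by blast
  have "\<bar>integral {..y} h - L\<bar> \<le> e/2" if "B \<le> y" for y
  proof (rule tendsto_upperbound)
    show "((\<lambda>a. \<bar>integral {a..y} h - L\<bar>) \<longlongrightarrow> \<bar>integral {..y} h - L\<bar>) at_bot"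
      by (intro tendsto_intros hk_halfline_limit[OF h])
    show "\<forall>\<^sub>F a in at_bot. \<bar>integral {a..y} h - L\<bar> \<le> e/2"
      unfolding eventually_at_bot_linorder using B that less_imp_le by blast
  qed simp
  with \<open>e > 0\<close> show "\<forall>\<^sub>F y in at_top. dist (integral {..y} h) L < e"
    unfolding eventually_at_top_linorder dist_real_def by force
qed

lemma hk_primitive_at_bot:
  fixes h :: "real \<Rightarrow> real"
  assumes h: "(h has_integral L) UNIV"
  shows "((\<lambda>y. integral {..y} h) \<longlongrightarrow> 0) at_bot"
proof (rule tendstoI)
  fix e :: real assume "e > 0"
  then obtain B where "B > 0"
    and B: "\<And>a b. a \<le> -B \<Longrightarrow> B \<le> b \<Longrightarrow> \<bar>integral {a..b} h - L\<bar> < e/4"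
    using hk_interval_approx[OF h, of "e/4"] by auto
  \<comment> \<open>For \<open>a \<le> y \<le> -B\<close> the integral over \<open>[a,y]\<close> is the difference of two integrals over
      windows containing \<open>[-B,B]\<close>, both close to \<open>L\<close>.\<close>
  have "\<bar>integral {..y} h\<bar> \<le> e/2" if y: "y \<le> -B" for y
  proof (rule tendsto_upperbound)
    show "((\<lambda>a. \<bar>integral {a..y} h\<bar>) \<longlongrightarrow> \<bar>integral {..y} h\<bar>) at_bot"
      by (intro tendsto_intros hk_halfline_limit[OF h])
    have "\<bar>integral {a..y} h\<bar> \<le> e/2" if a: "a \<le> y" for a
    proof -
      have "integral {a..y} h + integral {y..B} h = integral {a..B} h"
        using Henstock_Kurzweil_Integration.integral_combine[of a y B h] a y \<open>B > 0\<close>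
          h integrable_on_subinterval by fastforce
      moreover have "\<bar>integral {a..B} h - L\<bar> < e/4" "\<bar>integral {y..B} h - L\<bar> < e/4"
        using B[of a B] B[of y B] a y by auto
      ultimately show ?thesis by linarith
    qed
    then show "\<forall>\<^sub>F a in at_bot. \<bar>integral {a..y} h\<bar> \<le> e/2"
      unfolding eventually_at_bot_linorder by blast
  qed simp
  with \<open>e > 0\<close> show "\<forall>\<^sub>F y in at_bot. dist (integral {..y} h) 0 < e"
    unfolding eventually_at_bot_linorder dist_real_def by force
qed

(* H is continuous, since H(y) = H(x-1) + \<integral>_{x-1}^y h near x. *)
lemma hk_primitive_continuous:
  fixes h :: "real \<Rightarrow> real"
  assumes h: "(h has_integral L) UNIV"
  shows "continuous_on UNIV (\<lambda>y. integral {..y} h)"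
proof (rule continuous_at_imp_continuous_on, intro ballI)
  fix x :: real
  have "continuous_on {x-1..x+1} (\<lambda>y. integral {..x-1} h + integral {x-1..y} h)"
    using h integrable_on_subinterval
    by (intro continuous_intros indefinite_integral_continuous_1) blast
  then have "continuous_on {x-1..x+1} (\<lambda>y. integral {..y} h)"
    by (rule continuous_on_eq) (auto simp: hk_halfline_split[OF h])
  then show "isCont (\<lambda>y. integral {..y} h) x"
    by (rule continuous_on_interior) auto
qed

lemma bounded_if_limits_at_infinity:
  fixes g :: "real \<Rightarrow> real"
  assumes "continuous_on UNIV g" "(g \<longlongrightarrow> l) at_top" "(g \<longlongrightarrow> m) at_bot"
  obtains M where "\<And>y. \<bar>g y\<bar> \<le> M"
proof -
  obtain N1 where N1: "\<And>y. y \<ge> N1 \<Longrightarrow> \<bar>g y - l\<bar> < 1"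
    using tendstoD[OF assms(2), of 1] unfolding eventually_at_top_linorder dist_real_def by auto
  obtain N2 where N2: "\<And>y. y \<le> N2 \<Longrightarrow> \<bar>g y - m\<bar> < 1"
    using tendstoD[OF assms(3), of 1] unfolding eventually_at_bot_linorder dist_real_def by auto
  have "bounded (g ` {N2..N1})"
    using assms(1) by (intro compact_imp_bounded compact_continuous_image)
      (auto intro: continuous_on_subset)
  then obtain M0 where "\<forall>z \<in> g ` {N2..N1}. norm z \<le> M0"
    unfolding bounded_iff by blast
  then have M0: "\<And>y. y \<in> {N2..N1} \<Longrightarrow> \<bar>g y\<bar> \<le> M0" by auto
  have "\<bar>g y\<bar> \<le> max M0 (max (\<bar>l\<bar> + 1) (\<bar>m\<bar> + 1))" for y
    using N1[of y] N2[of y] M0[of y] by (cases "y \<le> N2"; cases "N1 \<le> y") auto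
  then show thesis by (rule that)
qed

lemma hk_interval_integrals_bounded:
  fixes h :: "real \<Rightarrow> real"
  assumes h: "(h has_integral L) UNIV"
  obtains M where "\<And>u v. \<bar>integral {u..v} h\<bar> \<le> M"
proof -
  obtain M where M: "\<And>y. \<bar>integral {..y} h\<bar> \<le> M"
    using bounded_if_limits_at_infinity[OF hk_primitive_continuous hk_primitive_at_top
        hk_primitive_at_bot, OF h h h] by blast
  have "\<bar>integral {u..v} h\<bar> \<le> 2 * M" for u v
  proof (cases "u \<le> v")
    case True
    then show ?thesis using hk_halfline_split[OF h True] M[of u] M[of v] by auto
  next
    case False
    then show ?thesis using M[of u] by auto
  qed
  then show thesis by (rule that)
qed

lemma bonnet_bound:
  fixes h \<psi> :: "real \<Rightarrow> real"
  assumes "u \<le> v" and hi: "h integrable_on {u..v}"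
    and mono: "\<And>s t. u \<le> s \<Longrightarrow> s \<le> t \<Longrightarrow> t \<le> v \<Longrightarrow> \<psi> s \<le> \<psi> t"
    and osc: "\<And>s t. u \<le> s \<Longrightarrow> s \<le> t \<Longrightarrow> t \<le> v \<Longrightarrow> \<bar>integral {s..t} h\<bar> \<le> \<eta>"
  shows "(\<lambda>t. \<psi> t * h t) integrable_on {u..v}"
    and "\<bar>integral {u..v} (\<lambda>t. \<psi> t * h t)\<bar> \<le> (\<bar>\<psi> u\<bar> + \<bar>\<psi> v\<bar>) * \<eta>"
proof -
  obtain c where c: "c \<in> {u..v}"
    and I: "((\<lambda>t. \<psi> t * h t) has_integral (\<psi> u * integral {u..c} h + \<psi> v * integral {c..v} h)) {u..v}"
    using second_mean_value_theorem_full[OF hi \<open>u \<le> v\<close>, of \<psi>] mono by blast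
  then show "(\<lambda>t. \<psi> t * h t) integrable_on {u..v}" by blast
  have "\<bar>\<psi> u * integral {u..c} h + \<psi> v * integral {c..v} h\<bar>
      \<le> \<bar>\<psi> u\<bar> * \<bar>integral {u..c} h\<bar> + \<bar>\<psi> v\<bar> * \<bar>integral {c..v} h\<bar>"
    by (simp add: abs_mult abs_triangle_ineq[THEN order_trans])
  also have "\<dots> \<le> \<bar>\<psi> u\<bar> * \<eta> + \<bar>\<psi> v\<bar> * \<eta>"
    using c by (intro add_mono mult_left_mono osc) auto
  finally show "\<bar>integral {u..v} (\<lambda>t. \<psi> t * h t)\<bar> \<le> (\<bar>\<psi> u\<bar> + \<bar>\<psi> v\<bar>) * \<eta>"
    using integral_unique[OF I] by (simp add: distrib_right)
qed

lemma bonnet_bound_decreasing: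
  fixes h \<psi> :: "real \<Rightarrow> real"
  assumes "u \<le> v" and "h integrable_on {u..v}"
    and "\<And>s t. u \<le> s \<Longrightarrow> s \<le> t \<Longrightarrow> t \<le> v \<Longrightarrow> \<psi> t \<le> \<psi> s"
    and "\<And>s t. u \<le> s \<Longrightarrow> s \<le> t \<Longrightarrow> t \<le> v \<Longrightarrow> \<bar>integral {s..t} h\<bar> \<le> \<eta>"
  shows "\<bar>integral {u..v} (\<lambda>t. \<psi> t * h t)\<bar> \<le> (\<bar>\<psi> u\<bar> + \<bar>\<psi> v\<bar>) * \<eta>"
  using bonnet_bound(2)[of u v h "\<lambda>t. - \<psi> t" \<eta>] assms by simp

(* A K-Lipschitz weight is an increasing weight minus the linear weight K(t-u), so the bound
   extends to Lipschitz weights. *)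
lemma lipschitz_weight_bound:
  fixes h \<psi> :: "real \<Rightarrow> real"
  assumes uv: "u \<le> v" and hi: "h integrable_on {u..v}" and K: "K \<ge> 0"
    and lip: "\<And>s t. s \<in> {u..v} \<Longrightarrow> t \<in> {u..v} \<Longrightarrow> \<bar>\<psi> s - \<psi> t\<bar> \<le> K * \<bar>s - t\<bar>"
    and osc: "\<And>s t. u \<le> s \<Longrightarrow> s \<le> t \<Longrightarrow> t \<le> v \<Longrightarrow> \<bar>integral {s..t} h\<bar> \<le> \<eta>"
  shows "(\<lambda>t. \<psi> t * h t) integrable_on {u..v}"
    and "\<bar>integral {u..v} (\<lambda>t. \<psi> t * h t)\<bar> \<le> (2 * \<bar>\<psi> u\<bar> + 3 * K * (v - u)) * \<eta>"
proof -
  define \<psi>\<^sub>1 where "\<psi>\<^sub>1 t = \<psi> t + K * (t - u)" for t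
  define \<psi>\<^sub>2 where "\<psi>\<^sub>2 t = K * (t - u)" for t
  have "\<eta> \<ge> 0" using osc[of u u] uv by simp
  have mono1: "\<psi>\<^sub>1 s \<le> \<psi>\<^sub>1 t" if "u \<le> s" "s \<le> t" "t \<le> v" for s t
    using lip[of t s] that by (auto simp: \<psi>\<^sub>1_def algebra_simps abs_le_iff)
  have mono2: "\<psi>\<^sub>2 s \<le> \<psi>\<^sub>2 t" if "s \<le> t" for s t
    using that K by (auto simp: \<psi>\<^sub>2_def intro: mult_left_mono)
  have B1: "(\<lambda>t. \<psi>\<^sub>1 t * h t) integrable_on {u..v}"
      "\<bar>integral {u..v} (\<lambda>t. \<psi>\<^sub>1 t * h t)\<bar> \<le> (\<bar>\<psi>\<^sub>1 u\<bar> + \<bar>\<psi>\<^sub>1 v\<bar>) * \<eta>"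
    using bonnet_bound[OF uv hi, of \<psi>\<^sub>1 \<eta>] mono1 osc by blast+
  have B2: "(\<lambda>t. \<psi>\<^sub>2 t * h t) integrable_on {u..v}"
      "\<bar>integral {u..v} (\<lambda>t. \<psi>\<^sub>2 t * h t)\<bar> \<le> (\<bar>\<psi>\<^sub>2 u\<bar> + \<bar>\<psi>\<^sub>2 v\<bar>) * \<eta>"
    using bonnet_bound[OF uv hi, of \<psi>\<^sub>2 \<eta>] mono2 osc by blast+
  have eq: "(\<lambda>t. \<psi> t * h t) = (\<lambda>t. \<psi>\<^sub>1 t * h t - \<psi>\<^sub>2 t * h t)"
    by (auto simp: \<psi>\<^sub>1_def \<psi>\<^sub>2_def algebra_simps)
  show "(\<lambda>t. \<psi> t * h t) integrable_on {u..v}"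
    unfolding eq using B1(1) B2(1) by (rule integrable_diff)
  have "\<bar>\<psi>\<^sub>1 u\<bar> + \<bar>\<psi>\<^sub>1 v\<bar> \<le> 2 * \<bar>\<psi> u\<bar> + 2 * K * (v - u)"
    using lip[of v u] uv K by (auto simp: \<psi>\<^sub>1_def abs_le_iff)
  then have "\<bar>integral {u..v} (\<lambda>t. \<psi>\<^sub>1 t * h t)\<bar> \<le> (2 * \<bar>\<psi> u\<bar> + 2 * K * (v - u)) * \<eta>"
    using B1(2) \<open>\<eta> \<ge> 0\<close> by (meson mult_right_mono order_trans)
  moreover have "\<bar>integral {u..v} (\<lambda>t. \<psi>\<^sub>2 t * h t)\<bar> \<le> K * (v - u) * \<eta>"
    using B2(2) uv K by (simp add: \<psi>\<^sub>2_def)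
  moreover have "integral {u..v} (\<lambda>t. \<psi> t * h t)
      = integral {u..v} (\<lambda>t. \<psi>\<^sub>1 t * h t) - integral {u..v} (\<lambda>t. \<psi>\<^sub>2 t * h t)"
    unfolding eq using B1(1) B2(1) by (rule integral_diff)
  ultimately show "\<bar>integral {u..v} (\<lambda>t. \<psi> t * h t)\<bar> \<le> (2 * \<bar>\<psi> u\<bar> + 3 * K * (v - u)) * \<eta>"
    by (simp add: algebra_simps)
qed

lemma lipschitz_from_derivative_bound:
  fixes \<phi> \<phi>' :: "real \<Rightarrow> real"
  assumes "\<And>x. (\<phi> has_real_derivative \<phi>' x) (at x)"
    and "\<And>x. x \<in> {a..b} \<Longrightarrow> \<bar>\<phi>' x\<bar> \<le> K"
    and "s \<in> {a..b}" "t \<in> {a..b}"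
  shows "\<bar>\<phi> s - \<phi> t\<bar> \<le> K * \<bar>s - t\<bar>"
proof -
  have *: "\<bar>\<phi> q - \<phi> p\<bar> \<le> K * (q - p)" if "p < q" "p \<in> {a..b}" "q \<in> {a..b}" for p q
  proof -
    obtain z where z: "p < z" "z < q" "\<phi> q - \<phi> p = (q - p) * \<phi>' z"
      using MVT2[OF \<open>p < q\<close>, of \<phi> \<phi>'] assms(1) by blast
    have "\<bar>\<phi>' z\<bar> \<le> K" using assms(2) z that by auto
    then show ?thesis using z(3) \<open>p < q\<close> by (simp add: abs_mult mult.commute mult_left_mono)
  qed
  consider "s < t" | "s = t" | "t < s" by linarith
  then show ?thesis
    using *[of s t] *[of t s] assms(3,4) by cases (auto simp: abs_minus_commute)
qed

lemma continuous_on_interval_bound: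
  fixes g :: "real \<Rightarrow> real"
  assumes "continuous_on {a..b} g"
  obtains K where "K > 0" and "\<And>x. x \<in> {a..b} \<Longrightarrow> \<bar>g x\<bar> \<le> K"
proof -
  have "bounded (g ` {a..b})"
    using assms by (intro compact_imp_bounded compact_continuous_image) auto
  then obtain K where "K > 0" "\<forall>y\<in>g ` {a..b}. norm y \<le> K" unfolding bounded_pos by blast
  then show thesis using that by auto
qed

lemma product_increment_estimate:
  fixes f \<phi> F :: "real \<Rightarrow> real"
  assumes uv: "u \<le> v" and fi: "f integrable_on {u..v}"
    and F: "\<And>s t. u \<le> s \<Longrightarrow> s \<le> t \<Longrightarrow> t \<le> v \<Longrightarrow> F t - F s = integral {s..t} f"
    and osc: "\<And>s t. s \<in> {u..v} \<Longrightarrow> t \<in> {u..v} \<Longrightarrow> \<bar>F s - F t\<bar> \<le> \<eta>"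
    and K: "K \<ge> 0"
    and lip: "\<And>s t. s \<in> {u..v} \<Longrightarrow> t \<in> {u..v} \<Longrightarrow> \<bar>\<phi> s - \<phi> t\<bar> \<le> K * \<bar>s - t\<bar>"
    and w: "w \<in> {u..v}"
  shows "(\<lambda>t. f t * \<phi> t) integrable_on {u..v}"
    and "\<bar>F v * \<phi> v - F u * \<phi> u - integral {u..v} (\<lambda>t. f t * \<phi> t) - F w * (\<phi> v - \<phi> u)\<bar>
           \<le> 4 * K * \<eta> * (v - u)"
proof -
  define \<psi> where "\<psi> t = \<phi> t - \<phi> u" for t
  have osc_int: "\<bar>integral {s..t} f\<bar> \<le> \<eta>" if "u \<le> s" "s \<le> t" "t \<le> v" for s t
    using F[OF that] osc[of t s] that by auto
  have lip\<psi>: "\<bar>\<psi> s - \<psi> t\<bar> \<le> K * \<bar>s - t\<bar>" if "s \<in> {u..v}" "t \<in> {u..v}" for s t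
    using lip[OF that] by (simp add: \<psi>_def)
  have L: "(\<lambda>t. \<psi> t * f t) integrable_on {u..v}"
    "\<bar>integral {u..v} (\<lambda>t. \<psi> t * f t)\<bar> \<le> (2 * \<bar>\<psi> u\<bar> + 3 * K * (v - u)) * \<eta>"
    using lipschitz_weight_bound[OF uv fi K, of \<psi> \<eta>] lip\<psi> osc_int by blast+
  have eq: "(\<lambda>t. f t * \<phi> t) = (\<lambda>t. \<psi> t * f t + \<phi> u * f t)"
    by (auto simp: \<psi>_def algebra_simps)
  show "(\<lambda>t. f t * \<phi> t) integrable_on {u..v}"
    unfolding eq using L(1) fi by (intro integrable_add integrable_on_mult_right)
  have "integral {u..v} (\<lambda>t. f t * \<phi> t) = integral {u..v} (\<lambda>t. \<psi> t * f t) + \<phi> u * (F v - F u)"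
    unfolding eq using L(1) fi F[OF order_refl uv order_refl]
    by (simp add: integral_add integrable_on_mult_right)
  then have "F v * \<phi> v - F u * \<phi> u - integral {u..v} (\<lambda>t. f t * \<phi> t) - F w * (\<phi> v - \<phi> u)
      = (F v - F w) * (\<phi> v - \<phi> u) - integral {u..v} (\<lambda>t. \<psi> t * f t)"
    by (simp add: algebra_simps)
  moreover have "\<bar>(F v - F w) * (\<phi> v - \<phi> u)\<bar> \<le> \<eta> * (K * (v - u))"
    unfolding abs_mult using osc[of v w] lip[of v u] uv w
    by (intro mult_mono) auto
  ultimately show "\<bar>F v * \<phi> v - F u * \<phi> u - integral {u..v} (\<lambda>t. f t * \<phi> t) - F w * (\<phi> v - \<phi> u)\<bar>
           \<le> 4 * K * \<eta> * (v - u)"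
    using L(2) by (simp add: \<psi>_def algebra_simps)
qed

(* Hence E(y) = F(y) \<phi>(y) - \<integral>_a^y f \<phi> is differentiable with derivative F \<phi>', although
   neither term is differentiable on its own when f is not continuous. *)
lemma product_minus_integral_derivative:
  fixes f \<phi> \<phi>' F :: "real \<Rightarrow> real"
  assumes fi: "f integrable_on {a..b}" and f\<phi>i: "(\<lambda>t. f t * \<phi> t) integrable_on {a..b}"
    and F: "\<And>s t. a \<le> s \<Longrightarrow> s \<le> t \<Longrightarrow> t \<le> b \<Longrightarrow> F t - F s = integral {s..t} f"
    and Fc: "continuous_on {a..b} F"
    and \<phi>d: "(\<phi> has_real_derivative \<phi>' x) (at x)"
    and K: "K \<ge> 0"
    and lip: "\<And>s t. s \<in> {a..b} \<Longrightarrow> t \<in> {a..b} \<Longrightarrow> \<bar>\<phi> s - \<phi> t\<bar> \<le> K * \<bar>s - t\<bar>"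
    and x: "x \<in> {a..b}"
  shows "((\<lambda>y. F y * \<phi> y - integral {a..y} (\<lambda>t. f t * \<phi> t)) has_real_derivative F x * \<phi>' x)
           (at x within {a..b})"
  unfolding has_field_derivative_def has_derivative_within_alt
proof (intro conjI allI impI)
  show "bounded_linear ((*) (F x * \<phi>' x))" by (rule bounded_linear_mult_right)
  fix e :: real assume "e > 0"
  define E where "E y = F y * \<phi> y - integral {a..y} (\<lambda>t. f t * \<phi> t)" for y
  define \<eta> where "\<eta> = e / (8 * K + 1)"
  have "\<eta> > 0" and K\<eta>: "4 * K * \<eta> \<le> e/2"
    using \<open>e > 0\<close> K by (auto simp: \<eta>_def field_simps)
  obtain d1 where "d1 > 0"
    and d1: "\<And>y. y \<in> {a..b} \<Longrightarrow> \<bar>y - x\<bar> < d1 \<Longrightarrow> \<bar>F y - F x\<bar> < \<eta>/2"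
    using Fc x \<open>\<eta> > 0\<close> unfolding continuous_on_iff dist_real_def by (meson half_gt_zero)
  define e' where "e' = e / (2 * (\<bar>F x\<bar> + 1))"
  have "e' > 0" using \<open>e > 0\<close> by (simp add: e'_def add_pos_nonneg)
  have Fe': "\<bar>F x\<bar> * e' \<le> e/2"
    using \<open>e > 0\<close> by (simp add: e'_def field_simps)
  obtain d2 where "d2 > 0"
    and d2: "\<And>y. \<bar>y - x\<bar> < d2 \<Longrightarrow> \<bar>\<phi> y - \<phi> x - \<phi>' x * (y - x)\<bar> \<le> e' * \<bar>y - x\<bar>"
    using \<phi>d \<open>e' > 0\<close> unfolding has_field_derivative_def has_derivative_at_alt
    by (metis real_norm_def)
  show "\<exists>d>0. \<forall>y\<in>{a..b}. norm (y - x) < d \<longrightarrow>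
      norm (E y - E x - F x * \<phi>' x * (y - x)) \<le> e * norm (y - x)"
  proof (intro exI[of _ "min d1 d2"] conjI ballI impI)
    show "min d1 d2 > 0" using \<open>d1 > 0\<close> \<open>d2 > 0\<close> by simp
    fix y assume y: "y \<in> {a..b}" "norm (y - x) < min d1 d2"
    define u where "u = min x y"
    define v where "v = max x y"
    have uv: "u \<le> v" "a \<le> u" "v \<le> b" "x \<in> {u..v}" "v - u = \<bar>y - x\<bar>"
      using x y by (auto simp: u_def v_def)
    have osc: "\<bar>F s - F t\<bar> \<le> \<eta>" if "s \<in> {u..v}" "t \<in> {u..v}" for s t
    proof -
      have "s \<in> {a..b}" "t \<in> {a..b}" "\<bar>s - x\<bar> < d1" "\<bar>t - x\<bar> < d1"
        using that uv y by (auto simp: u_def v_def abs_le_iff abs_less_iff)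
      then have "\<bar>F s - F x\<bar> < \<eta>/2" "\<bar>F t - F x\<bar> < \<eta>/2" using d1 by auto
      then show ?thesis by linarith
    qed
    have fi': "f integrable_on {u..v}"
      using fi integrable_on_subinterval uv by fastforce
    have "\<bar>F v * \<phi> v - F u * \<phi> u - integral {u..v} (\<lambda>t. f t * \<phi> t) - F x * (\<phi> v - \<phi> u)\<bar>
        \<le> 4 * K * \<eta> * (v - u)"
      by (rule product_increment_estimate(2)[OF uv(1) fi' _ osc K _ uv(4)])
        (use F lip uv in auto)
    moreover have "E v - E u = F v * \<phi> v - F u * \<phi> u - integral {u..v} (\<lambda>t. f t * \<phi> t)"
      using Henstock_Kurzweil_Integration.integral_combine[of a u v "\<lambda>t. f t * \<phi> t"]
        f\<phi>i integrable_on_subinterval uv by (fastforce simp: E_def)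
    moreover have "\<bar>E y - E x - F x * (\<phi> y - \<phi> x)\<bar> = \<bar>E v - E u - F x * (\<phi> v - \<phi> u)\<bar>"
      by (cases "x \<le> y") (auto simp: u_def v_def abs_minus_commute algebra_simps)
    ultimately have inc: "\<bar>E y - E x - F x * (\<phi> y - \<phi> x)\<bar> \<le> e/2 * \<bar>y - x\<bar>"
      using K\<eta> mult_right_mono[OF K\<eta>, of "\<bar>y - x\<bar>"] uv(5) by simp
    have "\<bar>F x * (\<phi> y - \<phi> x - \<phi>' x * (y - x))\<bar> \<le> \<bar>F x\<bar> * (e' * \<bar>y - x\<bar>)"
      unfolding abs_mult using d2 y by (intro mult_left_mono) auto
    also have "\<dots> \<le> e/2 * \<bar>y - x\<bar>"
      using mult_right_mono[OF Fe', of "\<bar>y - x\<bar>"] by (simp add: mult.assoc)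
    finally have lin: "\<bar>F x * (\<phi> y - \<phi> x - \<phi>' x * (y - x))\<bar> \<le> e/2 * \<bar>y - x\<bar>" .
    have "E y - E x - F x * \<phi>' x * (y - x)
        = (E y - E x - F x * (\<phi> y - \<phi> x)) + F x * (\<phi> y - \<phi> x - \<phi>' x * (y - x))"
      by (simp add: algebra_simps)
    then show "norm (E y - E x - F x * \<phi>' x * (y - x)) \<le> e * norm (y - x)"
      using inc lin unfolding real_norm_def by linarith
  qed
qed

(* Integration by parts for a Henstock-Kurzweil integrable f with continuous primitive F against
   a C^1 function \<phi>: E(y) - \<integral>_a^y F \<phi>' has derivative 0, hence is constant. *)
lemma integration_by_parts_primitive:
  fixes f \<phi> \<phi>' F :: "real \<Rightarrow> real"
  assumes ab: "a \<le> b" and fi: "f integrable_on {a..b}"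
    and F: "\<And>s t. a \<le> s \<Longrightarrow> s \<le> t \<Longrightarrow> t \<le> b \<Longrightarrow> F t - F s = integral {s..t} f"
    and Fc: "continuous_on {a..b} F"
    and \<phi>d: "\<And>x. (\<phi> has_real_derivative \<phi>' x) (at x)"
    and \<phi>'c: "continuous_on {a..b} \<phi>'"
  shows "(\<lambda>x. f x * \<phi> x) integrable_on {a..b}"
    and "integral {a..b} (\<lambda>x. f x * \<phi> x)
           = F b * \<phi> b - F a * \<phi> a - integral {a..b} (\<lambda>x. F x * \<phi>' x)"
proof -
  obtain K where "K > 0" and K: "\<And>x. x \<in> {a..b} \<Longrightarrow> \<bar>\<phi>' x\<bar> \<le> K"
    using continuous_on_interval_bound[OF \<phi>'c] by blast
  have lip: "\<bar>\<phi> s - \<phi> t\<bar> \<le> K * \<bar>s - t\<bar>" if "s \<in> {a..b}" "t \<in> {a..b}" for s t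
    using lipschitz_from_derivative_bound[OF \<phi>d K that] .
  obtain M where M: "\<And>x. x \<in> {a..b} \<Longrightarrow> \<bar>F x\<bar> \<le> M"
    using continuous_on_interval_bound[OF Fc] by blast
  have osc: "\<bar>F s - F t\<bar> \<le> 2 * M" if "s \<in> {a..b}" "t \<in> {a..b}" for s t
    using M[OF that(1)] M[OF that(2)] by linarith
  show f\<phi>i: "(\<lambda>x. f x * \<phi> x) integrable_on {a..b}"
    using product_increment_estimate(1)[OF ab fi F osc _ lip, of a] \<open>K > 0\<close> ab by auto
  define G where "G y = F y * \<phi> y - integral {a..y} (\<lambda>t. f t * \<phi> t)
                           - integral {a..y} (\<lambda>t. F t * \<phi>' t)" for y
  have "(G has_real_derivative 0) (at x within {a..b})" if x: "x \<in> {a..b}" for x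
  proof -
    have "continuous_on {a..b} (\<lambda>t. F t * \<phi>' t)" using Fc \<phi>'c by (intro continuous_intros)
    then have "((\<lambda>y. integral {a..y} (\<lambda>t. F t * \<phi>' t)) has_real_derivative F x * \<phi>' x)
        (at x within {a..b})"
      using integral_has_real_derivative x by blast
    moreover have "0 \<le> K" using \<open>K > 0\<close> by simp
    note product_minus_integral_derivative[where \<phi>'=\<phi>' and x=x, OF fi f\<phi>i F Fc \<phi>d this lip x]
    ultimately show ?thesis unfolding G_def using DERIV_diff by fastforce
  qed
  then obtain c where "\<forall>x\<in>{a..b}. G x = c"
    using has_field_derivative_zero_constant[of "{a..b}" G] by auto
  then have "G b = G a" using ab by auto
  then show "integral {a..b} (\<lambda>x. f x * \<phi> x)
           = F b * \<phi> b - F a * \<phi> a - integral {a..b} (\<lambda>x. F x * \<phi>' x)"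
    by (simp add: G_def algebra_simps)
qed

lemma bound_from_vanishing_limit:
  fixes G :: "real \<Rightarrow> real"
  assumes "(G \<longlongrightarrow> 0) F" and "F \<noteq> bot" and "\<forall>\<^sub>F y in F. \<bar>G y - G x\<bar> \<le> c"
  shows "\<bar>G x\<bar> \<le> c"
proof -
  have "((\<lambda>y. \<bar>G y - G x\<bar>) \<longlongrightarrow> \<bar>0 - G x\<bar>) F" by (intro tendsto_intros assms(1))
  from tendsto_upperbound[OF this assms(3,2)] show ?thesis by simp
qed

(* Decay of the primitive: with g(t) = |t|^\<alpha> f(t), for |x| \<ge> 1 the tail of F beyond x is an
   integral of g against the monotone weight |t|^(-\<alpha>), so by Bonnet's bound and the boundedness
   of the integrals of g it is O(|x|^(-\<alpha>)). *)
lemma primitive_decay: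
  fixes f :: "real \<Rightarrow> real"
  assumes f0: "(f has_integral 0) UNIV" and "\<alpha> > 0"
    and gi: "(\<lambda>t. \<bar>t\<bar> powr \<alpha> * f t) integrable_on UNIV"
  obtains C where "C \<ge> 0" and "\<And>x. 1 \<le> \<bar>x\<bar> \<Longrightarrow> \<bar>integral {..x} f\<bar> \<le> C * \<bar>x\<bar> powr (-\<alpha>)"
proof -
  define g where "g t = \<bar>t\<bar> powr \<alpha> * f t" for t
  define w where "w t = \<bar>t\<bar> powr (-\<alpha>)" for t :: real
  obtain M where M: "\<And>u v. \<bar>integral {u..v} g\<bar> \<le> M"
    using hk_interval_integrals_bounded[OF integrable_integral[OF gi]] unfolding g_def by blast
  have "M \<ge> 0" using M[of 0 0] by simp
  have gi': "g integrable_on {u..v}" for u v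
    using gi integrable_on_subinterval unfolding g_def by blast
  have fw: "f t = w t * g t" if "t \<noteq> 0" for t
    using that by (simp add: w_def g_def powr_minus field_simps)
  have w_mono: "w t \<le> w s" if "0 < \<bar>s\<bar>" "\<bar>s\<bar> \<le> \<bar>t\<bar>" for s t
    unfolding w_def using that \<open>\<alpha> > 0\<close> by (intro powr_mono2') auto
  let ?F = "\<lambda>y. integral {..y} f"
  have "\<bar>?F x\<bar> \<le> 2 * M * w x" if x: "1 \<le> \<bar>x\<bar>" for x
  proof (cases "x \<ge> 1")
    case True
    have "\<bar>?F y - ?F x\<bar> \<le> 2 * M * w x" if "x \<le> y" for y
    proof -
      have "?F y - ?F x = integral {x..y} f" using hk_halfline_split[OF f0 \<open>x \<le> y\<close>] by simp
      also have "\<dots> = integral {x..y} (\<lambda>t. w t * g t)"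
        by (rule integral_cong) (use True fw in auto)
      finally have "\<bar>?F y - ?F x\<bar> = \<bar>integral {x..y} (\<lambda>t. w t * g t)\<bar>" by simp
      also have "\<dots> \<le> (\<bar>w x\<bar> + \<bar>w y\<bar>) * M"
        by (rule bonnet_bound_decreasing[OF \<open>x \<le> y\<close> gi']) (use True w_mono M in auto)
      also have "\<dots> \<le> (2 * w x) * M"
        using w_mono[of x y] True \<open>x \<le> y\<close> \<open>M \<ge> 0\<close> by (intro mult_right_mono) (auto simp: w_def)
      finally show ?thesis by (simp add: mult.commute mult.left_commute)
    qed
    then show ?thesis
      by (intro bound_from_vanishing_limit[OF hk_primitive_at_top[OF f0]])
        (auto simp: eventually_at_top_linorder)
  next
    case False
    then have "x \<le> -1" using x by auto
    have "\<bar>?F y - ?F x\<bar> \<le> 2 * M * w x" if "y \<le> x" for y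
    proof -
      have "?F x - ?F y = integral {y..x} f" using hk_halfline_split[OF f0 \<open>y \<le> x\<close>] by simp
      also have "\<dots> = integral {y..x} (\<lambda>t. w t * g t)"
        by (rule integral_cong) (use \<open>x \<le> -1\<close> fw in auto)
      finally have "\<bar>?F y - ?F x\<bar> = \<bar>integral {y..x} (\<lambda>t. w t * g t)\<bar>" by simp
      also have "\<dots> \<le> (\<bar>w y\<bar> + \<bar>w x\<bar>) * M"
        by (rule bonnet_bound(2)[OF \<open>y \<le> x\<close> gi']) (use \<open>x \<le> -1\<close> w_mono M in auto)
      also have "\<dots> \<le> (2 * w x) * M"
        using w_mono[of x y] \<open>x \<le> -1\<close> \<open>y \<le> x\<close> \<open>M \<ge> 0\<close>
        by (intro mult_right_mono) (auto simp: w_def)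
      finally show ?thesis by (simp add: mult.commute mult.left_commute)
    qed
    then show ?thesis
      by (intro bound_from_vanishing_limit[OF hk_primitive_at_bot[OF f0]])
        (auto simp: eventually_at_bot_linorder)
  qed
  with \<open>M \<ge> 0\<close> that[of "2 * M"] show thesis by (simp add: w_def)
qed

definition decay_profile :: "real \<Rightarrow> real \<Rightarrow> real" where
  "decay_profile s x = (if \<bar>x\<bar> \<le> 1 then 1 else 0)
     + (if 1 \<le> x then x powr (-s) else 0) + (if x \<le> -1 then (-x) powr (-s) else 0)"

lemma integrable_decay_profile:
  assumes "s > 1"
  shows "integrable lebesgue (decay_profile s)"
proof -
  define tail where "tail x = (if 1 \<le> x then x powr (-s) else 0)" for x :: real
  define core :: "real \<Rightarrow> real" where "core x = (if \<bar>x\<bar> \<le> 1 then 1 else 0)" for x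
  have "(\<lambda>x. x powr (-s)) absolutely_integrable_on {1::real..}"
    using has_integral_powr_to_inf[of "-s" 1] assms
    by (intro nonnegative_absolutely_integrable_1) (auto simp: integrable_on_def)
  then have "integrable lebesgue (\<lambda>x. indicator {1..} x * x powr (-s))"
    unfolding set_integrable_def by simp
  also have "(\<lambda>x. indicator {1..} x * x powr (-s)) = tail"
    by (auto simp: tail_def indicator_def)
  finally have tail: "integrable lebesgue tail" .
  have "(\<lambda>x. 1::real) absolutely_integrable_on {-1..1::real}" by auto
  then have "integrable lebesgue (indicator {-1..1} :: real \<Rightarrow> real)"
    unfolding set_integrable_def by simp
  also have "indicator {-1..1} = core"
    by (auto simp: core_def indicator_def abs_le_iff)
  finally have "integrable lebesgue (\<lambda>x. core x + tail x + tail (-x))"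
    using tail lebesgue_integrable_real_affine[OF tail, of "-1" 0] by simp
  also have "(\<lambda>x. core x + tail x + tail (-x)) = decay_profile s"
    by (auto simp: decay_profile_def core_def tail_def)
  finally show ?thesis .
qed

lemma decay_profile_core: "\<bar>x\<bar> \<le> 1 \<Longrightarrow> 1 \<le> decay_profile s x"
  by (auto simp: decay_profile_def)

lemma decay_profile_tail: "1 \<le> \<bar>x\<bar> \<Longrightarrow> \<bar>x\<bar> powr (-s) \<le> decay_profile s x"
  by (auto simp: decay_profile_def abs_if)

lemma in_Lp_of_bounded_decay:
  fixes F :: "real \<Rightarrow> real"
  assumes "p > 0" and "\<alpha> * p > 1" and Fc: "continuous_on UNIV F"
    and B: "\<And>x. \<bar>F x\<bar> \<le> B"
    and C: "\<And>x. 1 \<le> \<bar>x\<bar> \<Longrightarrow> \<bar>F x\<bar> \<le> C * \<bar>x\<bar> powr (-\<alpha>)" and "C \<ge> 0"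
  shows "in_Lp p F"
proof -
  have Fm: "F \<in> borel_measurable lebesgue"
    using Fc by (simp add: continuous_imp_measurable_on measurable_on_imp_borel_measurable_lebesgue_UNIV)
  define D where "D = max (B powr p) (C powr p)"
  have "D \<ge> 0" "C powr p \<le> D" by (simp_all add: D_def le_max_iff_disj)
  have bound: "\<bar>F x\<bar> powr p \<le> D * decay_profile (\<alpha> * p) x" for x
  proof (cases "\<bar>x\<bar> \<le> 1")
    case True
    have "\<bar>F x\<bar> powr p \<le> B powr p" using B[of x] \<open>p > 0\<close> by (intro powr_mono2) auto
    also have "\<dots> \<le> D * 1" by (simp add: D_def)
    also have "\<dots> \<le> D * decay_profile (\<alpha> * p) x"
      using decay_profile_core[OF True] \<open>D \<ge> 0\<close> by (intro mult_left_mono) auto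
    finally show ?thesis .
  next
    case False
    have "\<bar>F x\<bar> powr p \<le> (C * \<bar>x\<bar> powr (-\<alpha>)) powr p"
      using C[of x] False \<open>p > 0\<close> by (intro powr_mono2) auto
    also have "\<dots> = C powr p * \<bar>x\<bar> powr (- (\<alpha> * p))"
      using \<open>C \<ge> 0\<close> by (simp add: powr_mult powr_powr)
    also have "\<dots> \<le> D * decay_profile (\<alpha> * p) x"
      using decay_profile_tail[of x "\<alpha> * p"] False \<open>D \<ge> 0\<close> \<open>C powr p \<le> D\<close>
      by (intro mult_mono) auto
    finally show ?thesis .
  qed
  have "integrable lebesgue (\<lambda>x. \<bar>F x\<bar> powr p)"
  proof (rule Bochner_Integration.integrable_bound)
    show "integrable lebesgue (\<lambda>x. D * decay_profile (\<alpha> * p) x)"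
      using integrable_decay_profile[OF \<open>\<alpha> * p > 1\<close>] by simp
    show "(\<lambda>x. \<bar>F x\<bar> powr p) \<in> borel_measurable lebesgue" using Fm by measurable
    show "AE x in lebesgue. norm (\<bar>F x\<bar> powr p) \<le> norm (D * decay_profile (\<alpha> * p) x)"
      using bound by (intro AE_I2) (auto intro: order_trans[OF _ abs_ge_self])
  qed
  with Fm show ?thesis by (simp add: in_Lp_def)
qed

lemma test_function_C1:
  assumes "test_function \<phi>"
  shows "\<And>x. (\<phi> has_real_derivative deriv \<phi> x) (at x)"
    and "continuous_on UNIV (deriv \<phi>)"
proof -
  have "\<phi> differentiable_on UNIV" "deriv \<phi> differentiable_on UNIV"
    using assms unfolding test_function_def by (metis funpow_0 funpow_Suc_right o_apply)+
  then show "\<And>x. (\<phi> has_real_derivative deriv \<phi> x) (at x)" "continuous_on UNIV (deriv \<phi>)"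
    by (auto simp: DERIV_deriv_iff_real_differentiable differentiable_on_def
        intro: differentiable_imp_continuous_on)
qed

lemma test_function_support:
  assumes "test_function \<phi>"
  obtains R where "R > 0" and "\<And>x. R < \<bar>x\<bar> \<Longrightarrow> \<phi> x = 0 \<and> deriv \<phi> x = 0"
proof -
  have "bounded (closure {x. \<phi> x \<noteq> 0})"
    using assms unfolding test_function_def by (simp add: compact_imp_bounded)
  then obtain R where "R > 0" and R: "\<And>x. x \<in> closure {x. \<phi> x \<noteq> 0} \<Longrightarrow> norm x \<le> R"
    unfolding bounded_pos by blast
  have \<phi>0: "\<phi> x = 0" if "R < \<bar>x\<bar>" for x
    using R[of x] closure_subset[of "{x. \<phi> x \<noteq> 0}"] that by force
  \<comment> \<open>Outside \<open>[-R,R]\<close> the function \<open>\<phi>\<close> vanishes on an open set, so its derivative does too.\<close>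
  have "deriv \<phi> x = 0" if "R < \<bar>x\<bar>" for x
  proof -
    have "((\<lambda>_. 0) has_real_derivative deriv \<phi> x) (at x)"
    proof (rule has_field_derivative_transform_within_open[OF test_function_C1(1)[OF assms]])
      show "open {y::real. R < \<bar>y\<bar>}" by (intro open_Collect_less continuous_intros)
    qed (use that \<phi>0 in auto)
    then show ?thesis using DERIV_unique[OF _ DERIV_const] by blast
  qed
  with \<open>R > 0\<close> \<phi>0 show thesis using that by blast
qed

(* The primitive of an integrable function on the line has that function as distributional
   derivative: integrate by parts over an interval containing the support of the test
   function. *)
lemma distr_deriv_primitive:
  fixes f :: "real \<Rightarrow> real"
  assumes f: "(f has_integral L) UNIV"
  shows "distr_deriv (\<lambda>x. integral {..x} f) f"
  unfolding distr_deriv_def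
proof (intro allI impI)
  fix \<phi> :: "real \<Rightarrow> real"
  assume tf: "test_function \<phi>"
  let ?F = "\<lambda>x. integral {..x} f"
  obtain R where "R > 0" and R: "\<And>x. R < \<bar>x\<bar> \<Longrightarrow> \<phi> x = 0 \<and> deriv \<phi> x = 0"
    using test_function_support[OF tf] by blast
  define a where "a = -R - 1"
  define b where "b = R + 1"
  have "a \<le> b" using \<open>R > 0\<close> by (simp add: a_def b_def)
  have out: "R < \<bar>x\<bar>" if "x \<notin> {a..b}" for x using that \<open>R > 0\<close> by (auto simp: a_def b_def)
  have Fc: "continuous_on {a..b} ?F"
    using hk_primitive_continuous[OF f] by (rule continuous_on_subset) simp
  have \<phi>'c: "continuous_on {a..b} (deriv \<phi>)"
    using test_function_C1(2)[OF tf] by (rule continuous_on_subset) simp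
  note IBP = integration_by_parts_primitive[OF \<open>a \<le> b\<close> _ _ Fc test_function_C1(1)[OF tf] \<phi>'c]
  have fi: "f integrable_on {a..b}" using f integrable_on_subinterval by blast
  have F: "?F t - ?F s = integral {s..t} f" if "s \<le> t" for s t
    using hk_halfline_split[OF f that] by simp
  \<comment> \<open>Both integrands vanish outside \<open>[a,b]\<close>, so the integrals over \<open>\<real>\<close> are those over \<open>[a,b]\<close>.\<close>
  have I1: "((\<lambda>x. f x * \<phi> x) has_integral integral {a..b} (\<lambda>x. f x * \<phi> x)) UNIV"
    using IBP(1)[OF fi F] by (intro has_integral_on_superset[OF integrable_integral]) (use out R in auto)
  have "(\<lambda>x. ?F x * deriv \<phi> x) integrable_on {a..b}"
    using Fc \<phi>'c by (intro integrable_continuous_real continuous_intros)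
  then have I2: "((\<lambda>x. ?F x * deriv \<phi> x) has_integral integral {a..b} (\<lambda>x. ?F x * deriv \<phi> x)) UNIV"
    by (intro has_integral_on_superset[OF integrable_integral]) (use out R in auto)
  have "\<phi> a = 0" "\<phi> b = 0" using R \<open>R > 0\<close> by (auto simp: a_def b_def)
  with I1 I2 IBP(2)[OF fi F]
  show "(\<lambda>x. f x * \<phi> x) integrable_on UNIV \<and> (\<lambda>x. ?F x * deriv \<phi> x) integrable_on UNIV \<and>
        integral UNIV (\<lambda>x. ?F x * deriv \<phi> x) = - integral UNIV (\<lambda>x. f x * \<phi> x)"
    by (auto simp: integral_unique integrable_on_def)
qed

theorem mainTheorem11:
  fixes p :: real and f :: "real \<Rightarrow> real"
  assumes "1 \<le> p"
    and "\<And>a b. f integrable_on {a..b}"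
    and "(f has_integral 0) UNIV"
    and "\<exists>\<alpha>>1/p. (\<lambda>t. \<bar>t\<bar> powr \<alpha> * f t) integrable_on UNIV"
  shows "(\<forall>x. f integrable_on {..x})
    \<and> in_Lp p (\<lambda>x. integral {..x} f)
    \<and> distr_deriv (\<lambda>x. integral {..x} f) f"
proof -
  let ?F = "\<lambda>x. integral {..x} f"
  from assms(4) obtain \<alpha> where "\<alpha> > 1/p" and gi: "(\<lambda>t. \<bar>t\<bar> powr \<alpha> * f t) integrable_on UNIV"
    by blast
  have "p > 0" using \<open>1 \<le> p\<close> by simp
  then have "\<alpha> * p > 1" using \<open>\<alpha> > 1/p\<close> by (simp add: divide_less_eq)
  have "\<alpha> > 0" using \<open>\<alpha> > 1/p\<close> \<open>p > 0\<close> by (meson divide_pos_pos less_trans zero_less_one)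
  obtain C where "C \<ge> 0" and decay: "\<And>x. 1 \<le> \<bar>x\<bar> \<Longrightarrow> \<bar>?F x\<bar> \<le> C * \<bar>x\<bar> powr (-\<alpha>)"
    using primitive_decay[OF assms(3) \<open>\<alpha> > 0\<close> gi] by blast
  obtain B where B: "\<And>x. \<bar>?F x\<bar> \<le> B"
    using bounded_if_limits_at_infinity[OF hk_primitive_continuous hk_primitive_at_top
        hk_primitive_at_bot, OF assms(3) assms(3) assms(3)] by blast
  have "in_Lp p ?F"
    by (rule in_Lp_of_bounded_decay[OF \<open>p > 0\<close> \<open>\<alpha> * p > 1\<close> hk_primitive_continuous[OF assms(3)]
          B decay \<open>C \<ge> 0\<close>])
  then show ?thesis
    using hk_halfline_integrable[OF assms(3)] distr_deriv_primitive[OF assms(3)] by blast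
qed

end
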